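(* Let $S$ be a finite set, $B\subseteq S$, and $\gamma,\gamma_B\in(0,1)$. Define $R_B(s) = 1-\gamma_B$ if $s\in B$ and $R_B(s)=0$ otherwise, and $\Gamma_B(s) = \gamma_B$ if $s\in B$ and $\Gamma_B(s)=\gamma$ otherwise. For an infinite sequence $\sigma=\sigma[0]\sigma[1]\dots$ of elements of $S$ and $t\in\mathbb{N}$ let $$G_t(\sigma) = \sum_{i=0}^{\infty} R_B(\sigma[t+i]) \prod_{j=0}^{i-1} \Gamma_B(\sigma[t+j]),$$ with the empty product equal to $1$. Then for every such $\sigma$ and every $t\in\mathbb{N}$, $$0 \le \gamma G_{t+1}(\sigma) \le G_t(\sigma) \le 1-\gamma_B + \gamma_B G_{t+1}(\sigma) \le 1.$$ *)

theory Defs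
  imports "HOL-Analysis.Analysis"
begin

definition R_B :: "'a set \<Rightarrow> real \<Rightarrow> 'a \<Rightarrow> real" where
  "R_B B gB s = (if s \<in> B then 1 - gB else 0)"

definition Gamma_B :: "'a set \<Rightarrow> real \<Rightarrow> real \<Rightarrow> 'a \<Rightarrow> real" where
  "Gamma_B B g gB s = (if s \<in> B then gB else g)"

definition G :: "'a set \<Rightarrow> real \<Rightarrow> real \<Rightarrow> (nat \<Rightarrow> 'a) \<Rightarrow> nat \<Rightarrow> real" where
  "G B g gB \<sigma> t = (\<Sum>i. R_B B gB (\<sigma> (t + i)) * (\<Prod>j<i. Gamma_B B g gB (\<sigma> (t + j))))"

end

theory Submission
  imports Defs
begin

text \<open>
  G is a discounted return whose per-step reward r and discount d satisfy
  0 \<le> r, 0 \<le> d and r + d \<le> 1, so it lies in [0, 1] and obeys the recursion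
  G t = r t + d t * G (t + 1). With x = G (t + 1) \<in> [0, 1], the value G t is g * x outside B
  and 1 - gB + gB * x inside B; both lie between g * x and 1 - gB + gB * x \<le> 1.
\<close>

definition discounted_return :: "(nat \<Rightarrow> real) \<Rightarrow> (nat \<Rightarrow> real) \<Rightarrow> real" where
  "discounted_return r d = (\<Sum>i. r i * (\<Prod>j<i. d j))"

lemma discounted_sum_lessThan_Suc_shift:
  fixes r d :: "nat \<Rightarrow> 'a::comm_semiring_1"
  shows "(\<Sum>i<Suc n. r i * (\<Prod>j<i. d j))
     = r 0 + d 0 * (\<Sum>i<n. r (Suc i) * (\<Prod>j<i. d (Suc j)))"
  by (simp only: sum.lessThan_Suc_shift prod.lessThan_Suc_shift sum_distrib_left)
    (simp add: mult.left_commute)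

lemma discounted_sum_le_1:
  fixes r d :: "nat \<Rightarrow> real"
  assumes "\<And>i. 0 \<le> d i" and "\<And>i. r i + d i \<le> 1"
  shows "(\<Sum>i<n. r i * (\<Prod>j<i. d j)) \<le> 1"
  using assms
proof (induction n arbitrary: r d)
  case 0
  then show ?case by simp
next
  case (Suc n)
  have "(\<Sum>i<Suc n. r i * (\<Prod>j<i. d j))
      = r 0 + d 0 * (\<Sum>i<n. r (Suc i) * (\<Prod>j<i. d (Suc j)))"
    by (rule discounted_sum_lessThan_Suc_shift)
  also have "\<dots> \<le> r 0 + d 0 * 1"
    using Suc.IH[of "\<lambda>i. d (Suc i)" "\<lambda>i. r (Suc i)"] Suc.prems
    by (intro add_left_mono mult_left_mono) auto
  also have "\<dots> \<le> 1"
    using Suc.prems(2) by simp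
  finally show ?case .
qed

context
  fixes r d :: "nat \<Rightarrow> real"
  assumes r_nonneg: "\<And>i. 0 \<le> r i"
    and d_nonneg: "\<And>i. 0 \<le> d i"
    and r_plus_d_le_1: "\<And>i. r i + d i \<le> 1"
begin

lemma discounted_term_nonneg: "0 \<le> r i * (\<Prod>j<i. d j)"
  by (simp add: r_nonneg d_nonneg prod_nonneg)

lemma summable_discounted_return: "summable (\<lambda>i. r i * (\<Prod>j<i. d j))"
  by (rule summableI_nonneg_bounded[where x = 1])
    (simp_all add: discounted_term_nonneg discounted_sum_le_1 d_nonneg r_plus_d_le_1)

lemma discounted_return_nonneg: "0 \<le> discounted_return r d"
  unfolding discounted_return_def
  by (intro suminf_nonneg summable_discounted_return discounted_term_nonneg)

lemma discounted_return_le_1: "discounted_return r d \<le> 1"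
  unfolding discounted_return_def
  by (intro suminf_le_const summable_discounted_return discounted_sum_le_1
      d_nonneg r_plus_d_le_1)

lemma discounted_return_unfold:
  "discounted_return r d
     = r 0 + d 0 * discounted_return (\<lambda>i. r (Suc i)) (\<lambda>i. d (Suc i))"
proof -
  have tail: "summable (\<lambda>i. r (Suc i) * (\<Prod>j<i. d (Suc j)))"
    by (rule summableI_nonneg_bounded[where x = 1])
      (simp_all add: r_nonneg d_nonneg prod_nonneg discounted_sum_le_1 r_plus_d_le_1)
  have "discounted_return r d = (\<Sum>i. r (Suc i) * (\<Prod>j<Suc i. d j)) + r 0"
    unfolding discounted_return_def
    using suminf_split_head[OF summable_discounted_return] by simp
  also have "(\<Sum>i. r (Suc i) * (\<Prod>j<Suc i. d j))
      = d 0 * (\<Sum>i. r (Suc i) * (\<Prod>j<i. d (Suc j)))"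
    by (simp add: prod.lessThan_Suc_shift suminf_mult[OF tail] mult.left_commute
        del: prod.lessThan_Suc)
  finally show ?thesis
    unfolding discounted_return_def by simp
qed

end

lemma G_eq_discounted_return:
  "G B g gB \<sigma> t
     = discounted_return (\<lambda>i. R_B B gB (\<sigma> (t + i))) (\<lambda>i. Gamma_B B g gB (\<sigma> (t + i)))"
  unfolding G_def discounted_return_def ..

lemma
  assumes "0 \<le> g" "g \<le> 1" "0 \<le> gB" "gB \<le> 1"
  shows G_nonneg: "0 \<le> G B g gB \<sigma> t"
    and G_le_1: "G B g gB \<sigma> t \<le> 1"
    and G_unfold: "G B g gB \<sigma> t = R_B B gB (\<sigma> t) + Gamma_B B g gB (\<sigma> t) * G B g gB \<sigma> (t + 1)"
proof -
  have step: "0 \<le> R_B B gB s" "0 \<le> Gamma_B B g gB s" "R_B B gB s + Gamma_B B g gB s \<le> 1" for s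
    using assms by (simp_all add: R_B_def Gamma_B_def)
  show "0 \<le> G B g gB \<sigma> t" "G B g gB \<sigma> t \<le> 1"
    unfolding G_eq_discounted_return
    by (simp_all add: step discounted_return_nonneg discounted_return_le_1)
  show "G B g gB \<sigma> t = R_B B gB (\<sigma> t) + Gamma_B B g gB (\<sigma> t) * G B g gB \<sigma> (t + 1)"
    unfolding G_eq_discounted_return
    by (subst discounted_return_unfold) (simp_all add: step)
qed

theorem lemma2:
  fixes S B :: "'a set" and g gB :: real and \<sigma> :: "nat \<Rightarrow> 'a" and t :: nat
  assumes "finite S" and "B \<subseteq> S"
    and "0 < g" "g < 1" "0 < gB" "gB < 1"
    and "\<And>n. \<sigma> n \<in> S"
  shows "0 \<le> g * G B g gB \<sigma> (t + 1)
    \<and> g * G B g gB \<sigma> (t + 1) \<le> G B g gB \<sigma> t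
    \<and> G B g gB \<sigma> t \<le> 1 - gB + gB * G B g gB \<sigma> (t + 1)
    \<and> 1 - gB + gB * G B g gB \<sigma> (t + 1) \<le> 1"
proof -
  have weights: "0 \<le> g" "g \<le> 1" "0 \<le> gB" "gB \<le> 1"
    using assms(3-6) by simp_all
  define x where "x = G B g gB \<sigma> (t + 1)"
  have x: "0 \<le> x" "x \<le> 1"
    unfolding x_def using G_nonneg[OF weights] G_le_1[OF weights] by blast+
  have "g * x \<le> x" "gB * x \<le> gB"
    using x weights by (simp_all add: mult_left_le_one_le mult_left_le)
  moreover have "x \<le> 1 - gB + gB * x"
    using mult_nonneg_nonneg[of "1 - gB" "1 - x"] x weights by (simp add: algebra_simps)
  ultimately show ?thesis
    unfolding G_unfold[OF weights, of B \<sigma> t] x_def[symmetric]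
    using x weights by (simp add: R_B_def Gamma_B_def)
qed

end
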